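(* Let $U$ be a disjunctive uninorm with neutral element $e\in\,]0,1[$, let $x\in[0,1]$ with $x<e$ be such that $U(x,\cdot)$ is continuous with range $[0,1]$, and let $f(s)=U(x,s)$ for $s\in[0,1]$. Let $a_x=\lim_{n\to+\infty}x_U^{(n)}$ and $d_x=\lim_{n\to+\infty}x_U^{(-n)}$. Then: (i) $f(s)\neq s$ for all $s\in\,]a_x,d_x[$; (ii) if $f(s)=s$ for some $s\in[0,1]$, then $U(s,t)\notin\,]a_x,d_x[$ for all $t\in[0,1]$; (iii) $f(a_x)=a_x$ and $f(d_x)=d_x$; (iv) $U(a_x,d_x)\in\{a_x,d_x\}$.
   Context: A uninorm is a map $U:[0,1]^2\to[0,1]$ that is commutative, associative, non-decreasing in each variable, and has a neutral element $e\in[0,1]$; it is disjunctive if $U(1,0)=1$. Under the hypotheses there is a unique $y\in[0,1]$ with $U(x,y)=e$ (and $y>e$). Define $x_U^{(0)}=e$, $x_U^{(n)}=U(x,x_U^{(n-1)})$ for $n\in\mathbb{N}$, and $x_U^{(-n)}=y_U^{(n)}$ where $y_U^{(0)}=e$, $y_U^{(n)}=U(y,y_U^{(n-1)})$; the sequence $(x_U^{(n)})_{n\ge0}$ is non-increasing and $(x_U^{(-n)})_{n\ge0}$ is non-decreasing, so the limits exist. *)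

theory Defs
  imports "HOL-Analysis.Analysis"
begin

text \<open>A uninorm on [0,1] with neutral element e (values outside [0,1]^2 are irrelevant).\<close>
definition uninorm :: "(real \<Rightarrow> real \<Rightarrow> real) \<Rightarrow> real \<Rightarrow> bool" where
  "uninorm U e \<longleftrightarrow>
     e \<in> {0..1} \<and>
     (\<forall>x\<in>{0..1}. \<forall>y\<in>{0..1}. U x y \<in> {0..1}) \<and>
     (\<forall>x\<in>{0..1}. \<forall>y\<in>{0..1}. U x y = U y x) \<and>
     (\<forall>x\<in>{0..1}. \<forall>y\<in>{0..1}. \<forall>z\<in>{0..1}. U (U x y) z = U x (U y z)) \<and>
     (\<forall>x\<in>{0..1}. \<forall>y\<in>{0..1}. \<forall>z\<in>{0..1}. x \<le> y \<longrightarrow> U x z \<le> U y z) \<and>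
     (\<forall>x\<in>{0..1}. U e x = x)"

definition disjunctive_uninorm :: "(real \<Rightarrow> real \<Rightarrow> real) \<Rightarrow> real \<Rightarrow> bool" where
  "disjunctive_uninorm U e \<longleftrightarrow> uninorm U e \<and> U 1 0 = 1"

fun upow :: "(real \<Rightarrow> real \<Rightarrow> real) \<Rightarrow> real \<Rightarrow> real \<Rightarrow> nat \<Rightarrow> real" where
  "upow U e x 0 = e"
| "upow U e x (Suc n) = U x (upow U e x n)"

definition uinv :: "(real \<Rightarrow> real \<Rightarrow> real) \<Rightarrow> real \<Rightarrow> real \<Rightarrow> real" where
  "uinv U e x = (THE y. y \<in> {0..1} \<and> U x y = e)"

definition upow_neg :: "(real \<Rightarrow> real \<Rightarrow> real) \<Rightarrow> real \<Rightarrow> real \<Rightarrow> nat \<Rightarrow> real" where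
  "upow_neg U e x n = upow U e (uinv U e x) n"

end

theory Submission
  imports Defs
begin

text \<open>
  Since U x is onto, x has an inverse y \<ge> e, and U y undoes U x. The iterates x^(n)
  decrease to a_x and the iterates y^(n) increase to d_x; continuity of U x makes both limits
  fixed points of U x (for d_x because U x maps y^(n+1) back to y^(n)). A fixed point s \<le> e
  of U x lies below every x^(n), hence below a_x; a fixed point s \<ge> e of U x is also fixed
  by U y, so it lies above every y^(n), hence above d_x. By associativity the fixed points of
  U x absorb multiplication, and a_x \<le> U a_x d_x \<le> d_x by monotonicity.
\<close>

locale unit_uninorm =
  fixes U :: "real \<Rightarrow> real \<Rightarrow> real" and e :: real
  assumes uninorm: "uninorm U e"
begin

lemma neutral_mem: "e \<in> {0..1}"
  using uninorm by (simp add: uninorm_def)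

lemma closed: "x \<in> {0..1} \<Longrightarrow> y \<in> {0..1} \<Longrightarrow> U x y \<in> {0..1}"
  using uninorm unfolding uninorm_def by blast

lemma commute: "x \<in> {0..1} \<Longrightarrow> y \<in> {0..1} \<Longrightarrow> U x y = U y x"
  using uninorm unfolding uninorm_def by blast

lemma assoc:
  "x \<in> {0..1} \<Longrightarrow> y \<in> {0..1} \<Longrightarrow> z \<in> {0..1} \<Longrightarrow> U (U x y) z = U x (U y z)"
  using uninorm unfolding uninorm_def by blast

lemma mono_left:
  "x \<in> {0..1} \<Longrightarrow> y \<in> {0..1} \<Longrightarrow> z \<in> {0..1} \<Longrightarrow> x \<le> y \<Longrightarrow> U x z \<le> U y z"
  using uninorm unfolding uninorm_def by blast

lemma mono_right:
  "x \<in> {0..1} \<Longrightarrow> y \<in> {0..1} \<Longrightarrow> z \<in> {0..1} \<Longrightarrow> y \<le> z \<Longrightarrow> U x y \<le> U x z"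
  using mono_left commute by metis

lemma left_neutral: "x \<in> {0..1} \<Longrightarrow> U e x = x"
  using uninorm unfolding uninorm_def by blast

lemma right_neutral: "x \<in> {0..1} \<Longrightarrow> U x e = x"
  using left_neutral commute neutral_mem by metis

lemma inverse_cancel:
  assumes "x \<in> {0..1}" "y \<in> {0..1}" "s \<in> {0..1}" and "U x y = e"
  shows "U y (U x s) = s"
proof -
  have "U y (U x s) = U (U y x) s"
    using assoc assms by simp
  also have "\<dots> = s"
    using assms commute left_neutral by simp
  finally show ?thesis .
qed

lemma uinv_eqI:
  assumes "x \<in> {0..1}" "y \<in> {0..1}" and "U x y = e"
  shows "uinv U e x = y"
  unfolding uinv_def
proof (rule the_equality)
  fix z assume z: "z \<in> {0..1} \<and> U x z = e"
  then have "z = U y (U x z)"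
    using inverse_cancel[OF assms(1,2) _ assms(3)] by metis
  also have "\<dots> = y"
    using z right_neutral[OF assms(2)] by simp
  finally show "z = y" .
qed (use assms in simp)

lemma inverse_ge_neutral:
  assumes "x \<in> {0..1}" "y \<in> {0..1}" "x \<le> e" and "U x y = e"
  shows "e \<le> y"
proof (rule ccontr)
  assume "\<not> e \<le> y"
  then have "e \<le> x"
    using mono_right[of x y e] assms neutral_mem right_neutral by simp
  then have "x = e"
    using assms by simp
  then show False
    using \<open>\<not> e \<le> y\<close> assms left_neutral by simp
qed

lemma upow_mem: "z \<in> {0..1} \<Longrightarrow> upow U e z n \<in> {0..1}"
  by (induction n) (use neutral_mem closed in auto)

lemma decseq_upow:
  assumes "z \<in> {0..1}" and "z \<le> e"
  shows "decseq (upow U e z)"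
proof (rule decseq_SucI)
  fix n show "upow U e z (Suc n) \<le> upow U e z n"
  proof (induction n)
    case 0
    then show ?case using assms right_neutral by simp
  next
    case (Suc n)
    then show ?case
      using mono_right[OF assms(1) upow_mem[OF assms(1)] upow_mem[OF assms(1)] Suc.IH] by simp
  qed
qed

lemma incseq_upow:
  assumes "z \<in> {0..1}" and "e \<le> z"
  shows "incseq (upow U e z)"
proof (rule incseq_SucI)
  fix n show "upow U e z n \<le> upow U e z (Suc n)"
  proof (induction n)
    case 0
    then show ?case using assms right_neutral by simp
  next
    case (Suc n)
    then show ?case
      using mono_right[OF assms(1) upow_mem[OF assms(1)] upow_mem[OF assms(1)] Suc.IH] by simp
  qed
qed

lemma upow_LIMSEQ:
  assumes "z \<in> {0..1}"
  shows "upow U e z \<longlonglongrightarrow> lim (upow U e z)"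
proof -
  have "Bseq (upow U e z)"
    using upow_mem[OF assms] by (intro BseqI'[of _ 1]) auto
  moreover have "monoseq (upow U e z)"
    using decseq_upow incseq_upow assms by (cases "z \<le> e") (auto simp: monoseq_iff)
  ultimately show ?thesis
    using Bseq_monoseq_convergent convergent_LIMSEQ_iff by blast
qed

lemma lim_upow_mem:
  assumes "z \<in> {0..1}"
  shows "lim (upow U e z) \<in> {0..1}"
proof -
  have "0 \<le> lim (upow U e z)"
    using upow_mem[OF assms] by (intro LIMSEQ_le_const[OF upow_LIMSEQ[OF assms]]) auto
  moreover have "lim (upow U e z) \<le> 1"
    using upow_mem[OF assms] by (intro LIMSEQ_le_const2[OF upow_LIMSEQ[OF assms]]) auto
  ultimately show ?thesis
    by simp
qed

lemma lim_upow_le_neutral: "z \<in> {0..1} \<Longrightarrow> z \<le> e \<Longrightarrow> lim (upow U e z) \<le> e"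
  using decseq_ge[OF decseq_upow upow_LIMSEQ, of z 0] by simp

lemma neutral_le_lim_upow: "z \<in> {0..1} \<Longrightarrow> e \<le> z \<Longrightarrow> e \<le> lim (upow U e z)"
  using incseq_le[OF incseq_upow upow_LIMSEQ, of z 0] by simp

lemma fixed_point_le_lim_upow:
  assumes "z \<in> {0..1}" "s \<in> {0..1}" "U z s = s" and "s \<le> e"
  shows "s \<le> lim (upow U e z)"
proof -
  have "s \<le> upow U e z n" for n
  proof (induction n)
    case (Suc n)
    then show ?case using mono_right[of z s] assms upow_mem by simp
  qed (use assms in simp)
  then show ?thesis
    using upow_LIMSEQ[OF assms(1)] by (intro LIMSEQ_le_const) auto
qed

lemma lim_upow_le_fixed_point:
  assumes "z \<in> {0..1}" "s \<in> {0..1}" "U z s = s" and "e \<le> s"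
  shows "lim (upow U e z) \<le> s"
proof -
  have "upow U e z n \<le> s" for n
  proof (induction n)
    case (Suc n)
    then show ?case using mono_right[of z _ s] assms upow_mem by simp
  qed (use assms in simp)
  then show ?thesis
    using upow_LIMSEQ[OF assms(1)] by (intro LIMSEQ_le_const2) auto
qed

lemma lim_upow_fixed_point:
  assumes "z \<in> {0..1}" and "continuous_on {0..1} (U z)"
  shows "U z (lim (upow U e z)) = lim (upow U e z)"
proof -
  have "(\<lambda>n. U z (upow U e z n)) \<longlonglongrightarrow> U z (lim (upow U e z))"
    using continuous_on_tendsto_compose[OF assms(2) upow_LIMSEQ] assms upow_mem lim_upow_mem
    by simp
  moreover have "(\<lambda>n. U z (upow U e z n)) \<longlonglongrightarrow> lim (upow U e z)"
    using LIMSEQ_Suc[OF upow_LIMSEQ[OF assms(1)]] by simp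
  ultimately show ?thesis
    using LIMSEQ_unique by blast
qed

lemma lim_upow_inverse_fixed_point:
  assumes "x \<in> {0..1}" "y \<in> {0..1}" "U x y = e" and "continuous_on {0..1} (U x)"
  shows "U x (lim (upow U e y)) = lim (upow U e y)"
proof -
  have "\<forall>\<^sub>F n in sequentially. upow U e y (Suc n) \<in> {0..1}"
    by (rule always_eventually) (use upow_mem[OF assms(2)] in blast)
  then have "(\<lambda>n. U x (upow U e y (Suc n))) \<longlonglongrightarrow> U x (lim (upow U e y))"
    using continuous_on_tendsto_compose[OF assms(4) LIMSEQ_Suc[OF upow_LIMSEQ[OF assms(2)]]
        lim_upow_mem[OF assms(2)]]
    by blast
  moreover have "U x (upow U e y (Suc n)) = upow U e y n" for n
  proof -
    have "U y x = e"
      using commute[OF assms(1,2)] assms(3) by simp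
    then show ?thesis
      using inverse_cancel[OF assms(2,1) upow_mem[OF assms(2)]] by simp
  qed
  ultimately have "upow U e y \<longlonglongrightarrow> U x (lim (upow U e y))"
    by simp
  then show ?thesis
    using upow_LIMSEQ[OF assms(2)] LIMSEQ_unique by blast
qed

lemma no_fixed_point_between:
  assumes "x \<in> {0..1}" "y \<in> {0..1}" "U x y = e"
    and "lim (upow U e x) < s" "s < lim (upow U e y)"
  shows "U x s \<noteq> s"
proof
  assume fixed: "U x s = s"
  have s: "s \<in> {0..1}"
    using assms lim_upow_mem[of x] lim_upow_mem[of y] by auto
  show False
  proof (cases "s \<le> e")
    case True
    then show False
      using fixed_point_le_lim_upow[of x s] assms s fixed by simp
  next
    case False
    have "U y s = s"
      using inverse_cancel[of x y s] assms s fixed by simp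
    then show False
      using lim_upow_le_fixed_point[of y s] False assms s by simp
  qed
qed

lemma fixed_point_mult:
  "x \<in> {0..1} \<Longrightarrow> s \<in> {0..1} \<Longrightarrow> t \<in> {0..1} \<Longrightarrow> U x s = s \<Longrightarrow> U x (U s t) = U s t"
  using assoc by metis

lemma mult_mem_between:
  assumes "a \<in> {0..1}" "d \<in> {0..1}" "a \<le> e" and "e \<le> d"
  shows "U a d \<in> {a..d}"
proof -
  have "a = U a e"
    using right_neutral[OF assms(1)] by simp
  also have "\<dots> \<le> U a d"
    using mono_right[OF assms(1) neutral_mem assms(2,4)] .
  finally have "a \<le> U a d" .
  have "U a d \<le> U e d"
    using mono_left[OF assms(1) neutral_mem assms(2,3)] .
  also have "\<dots> = d"
    using left_neutral[OF assms(2)] .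
  finally show ?thesis
    using \<open>a \<le> U a d\<close> by simp
qed

lemma mult_fixed_point_not_between:
  assumes "x \<in> {0..1}" "y \<in> {0..1}" "U x y = e"
    and "s \<in> {0..1}" "t \<in> {0..1}" "U x s = s"
  shows "U s t \<notin> {lim (upow U e x)<..<lim (upow U e y)}"
  using no_fixed_point_between[OF assms(1-3)] fixed_point_mult[OF assms(1,4,5,6)] by auto

lemma mult_lim_upow_mem:
  assumes "x \<in> {0..1}" "y \<in> {0..1}" "x \<le> e" "U x y = e"
    and "continuous_on {0..1} (U x)"
  shows "U (lim (upow U e x)) (lim (upow U e y)) \<in> {lim (upow U e x), lim (upow U e y)}"
proof -
  have "lim (upow U e x) \<le> e" "e \<le> lim (upow U e y)"
    using lim_upow_le_neutral[OF assms(1,3)] neutral_le_lim_upow[OF assms(2)]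
      inverse_ge_neutral[OF assms(1-4)] by simp_all
  then have "U (lim (upow U e x)) (lim (upow U e y)) \<in> {lim (upow U e x)..lim (upow U e y)}"
    using mult_mem_between lim_upow_mem assms(1,2) by simp
  moreover have "U (lim (upow U e x)) (lim (upow U e y)) \<notin> {lim (upow U e x)<..<lim (upow U e y)}"
    using mult_fixed_point_not_between[OF assms(1,2,4)] lim_upow_fixed_point[OF assms(1,5)]
      lim_upow_mem assms(1,2) by simp
  ultimately show ?thesis
    by auto
qed

end

theorem mainTheorem10:
  fixes U :: "real \<Rightarrow> real \<Rightarrow> real" and e x :: real
  assumes "disjunctive_uninorm U e"
    and "0 < e" and "e < 1"
    and "x \<in> {0..1}" and "x < e"
    and "continuous_on {0..1} (U x)"
    and "U x ` {0..1} = {0..1}"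
  defines "f \<equiv> (\<lambda>s. U x s)"
    and "a \<equiv> lim (upow U e x)"
    and "d \<equiv> lim (upow_neg U e x)"
  shows "(\<forall>s\<in>{a<..<d}. f s \<noteq> s)
    \<and> (\<forall>s\<in>{0..1}. f s = s \<longrightarrow> (\<forall>t\<in>{0..1}. U s t \<notin> {a<..<d}))
    \<and> (f a = a \<and> f d = d)
    \<and> U a d \<in> {a, d}"
proof -
  interpret unit_uninorm U e
    using assms(1) by (simp add: disjunctive_uninorm_def unit_uninorm_def)
  have "e \<in> U x ` {0..1}"
    using assms(7) neutral_mem by simp
  then obtain y where y: "y \<in> {0..1}" "U x y = e"
    by (metis imageE)
  have d: "d = lim (upow U e y)"
    using uinv_eqI[OF assms(4) y] by (simp add: d_def upow_neg_def[abs_def])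
  have "\<forall>s\<in>{a<..<d}. U x s \<noteq> s"
    using no_fixed_point_between[OF assms(4) y] unfolding a_def d by auto
  moreover have "\<forall>s\<in>{0..1}. U x s = s \<longrightarrow> (\<forall>t\<in>{0..1}. U s t \<notin> {a<..<d})"
    using mult_fixed_point_not_between[OF assms(4) y] unfolding a_def d by blast
  moreover have "U x a = a" "U x d = d"
    using lim_upow_fixed_point[OF assms(4,6)] lim_upow_inverse_fixed_point[OF assms(4) y assms(6)]
    unfolding a_def d by simp_all
  moreover have "U a d \<in> {a, d}"
    using mult_lim_upow_mem[OF assms(4) y(1) _ y(2) assms(6)] assms(5) unfolding a_def d by simp
  ultimately show ?thesis
    unfolding f_def by blast
qed

end
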